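(* Let $m\ge 2$, $n\ge 1$, and let $\mathcal{A}\in\mathbb{S}_{m,n}$ be a tensor with all entries nonnegative. Suppose $\mathcal{A}=\mathcal{B}+\mathcal{C}$ with $\mathcal{B}=\sum_{k=1}^{r_1}(u^{(k)})^m$ and $\mathcal{C}=\sum_{j=1}^{r_2}(v^{(j)})^m$, where $u^{(k)}\in\mathbb{R}^n$ for all $k\in[r_1]$ and $v^{(j)}\in\mathbb{R}^n_+$ for all $j\in[r_2]$. If there exists an index $i_0\in[n]$ such that $u^{(k)}_{i_0}>0$ for all $k\in[r_1]$, then $\mathcal{A}$ is doubly nonnegative.
   Context: $[n]=\{1,\dots,n\}$. $\mathbb{T}_{m,n}$ is the space of real $m$th order $n$-dimensional tensors $\mathcal{A}=(a_{i_1\ldots i_m})$, $i_j\in[n]$, and $\mathbb{S}_{m,n}$ is the subspace of symmetric tensors (entries invariant under all permutations of the indices). For $x\in\mathbb{R}^n$, $x^m\in\mathbb{S}_{m,n}$ is the tensor with entries $(x^m)_{i_1\ldots i_m}=x_{i_1}\cdots x_{i_m}$. For $\mathcal{A}\in\mathbb{T}_{m,n}$, $\mathcal{A}x^{m-1}\in\mathbb{R}^n$ has entries $(\mathcal{A}x^{m-1})_i=\sum_{i_2,\dots,i_m\in[n]}a_{ii_2\ldots i_m}x_{i_2}\cdots x_{i_m}$, and $x^{[m-1]}\in\mathbb{R}^n$ has entries $x_i^{m-1}$. A real number $\lambda$ is an H-eigenvalue of $\mathcal{A}\in\mathbb{S}_{m,n}$ if there is $x\in\mathbb{R}^n\setminus\{0\}$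 with $\mathcal{A}x^{m-1}=\lambda x^{[m-1]}$. A tensor $\mathcal{A}\in\mathbb{S}_{m,n}$ is doubly nonnegative if all its entries are nonnegative and all its H-eigenvalues are nonnegative. *)

theory Defs
  imports Complex_Main "HOL-Library.Multiset"
begin

text \<open>Indices are 0-based: the index set [n] is represented by {0..<n}.
  A tensor of order m and dimension n is a function on index lists of length m
  with entries in {0..<n}; vectors in R^n are functions nat => real (only
  components < n matter).\<close>

definition tidx :: "nat \<Rightarrow> nat \<Rightarrow> nat list set" where
  "tidx m n = {is. length is = m \<and> set is \<subseteq> {..<n}}"

definition symmetric_tensor :: "nat \<Rightarrow> nat \<Rightarrow> (nat list \<Rightarrow> real) \<Rightarrow> bool" where
  "symmetric_tensor m n A \<longleftrightarrow>
     (\<forall>is\<in>tidx m n. \<forall>js\<in>tidx m n. mset is = mset js \<longrightarrow> A is = A js)"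

definition tpow :: "(nat \<Rightarrow> real) \<Rightarrow> nat list \<Rightarrow> real" where
  "tpow x is = prod_list (map x is)"

definition tapply :: "nat \<Rightarrow> nat \<Rightarrow> (nat list \<Rightarrow> real) \<Rightarrow> (nat \<Rightarrow> real) \<Rightarrow> nat \<Rightarrow> real" where
  "tapply m n A x i = (\<Sum>is\<in>tidx (m - 1) n. A (i # is) * prod_list (map x is))"

definition H_eigenvalue :: "nat \<Rightarrow> nat \<Rightarrow> (nat list \<Rightarrow> real) \<Rightarrow> real \<Rightarrow> bool" where
  "H_eigenvalue m n A lam \<longleftrightarrow>
     (\<exists>x :: nat \<Rightarrow> real. (\<exists>i<n. x i \<noteq> 0) \<and>
        (\<forall>i<n. tapply m n A x i = lam * x i ^ (m - 1)))"

definition doubly_nonnegative :: "nat \<Rightarrow> nat \<Rightarrow> (nat list \<Rightarrow> real) \<Rightarrow> bool" where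
  "doubly_nonnegative m n A \<longleftrightarrow>
     symmetric_tensor m n A \<and> (\<forall>is\<in>tidx m n. A is \<ge> 0) \<and>
     (\<forall>lam. H_eigenvalue m n A lam \<longrightarrow> lam \<ge> 0)"

end

theory Submission
  imports Defs
begin

text \<open>Since each term of A is a rank-one tensor, A x^{m-1} has the explicit form
  (A x^{m-1})_i = \<Sum>_k u_k(i) <u_k,x>^{m-1} + \<Sum>_j v_j(i) <v_j,x>^{m-1}.
  For even m, pairing an eigenvector x with the eigen-equation gives
  \<lambda> \<Sum>_i x_i^m = \<Sum>_k <u_k,x>^m + \<Sum>_j <v_j,x>^m \<ge> 0.
  For odd m the exponent m - 1 is even, so the i0-th coordinate of A x^{m-1} is
  nonnegative; if x_{i0} \<noteq> 0 this gives \<lambda> \<ge> 0, and if x_{i0} = 0 the vanishing of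
  that coordinate forces <u_k,x> = 0 for all k, since u_k(i0) > 0, after which every
  coordinate of A x^{m-1} is nonnegative because v_j \<ge> 0.\<close>

lemma tidx_Suc: "tidx (Suc p) n = (\<lambda>(l, is). l # is) ` ({..<n} \<times> tidx p n)"
proof (rule set_eqI)
  fix xs
  show "xs \<in> tidx (Suc p) n \<longleftrightarrow> xs \<in> (\<lambda>(l, is). l # is) ` ({..<n} \<times> tidx p n)"
    by (cases xs) (auto simp: tidx_def)
qed

lemma sum_tidx_prod_list:
  fixes f :: "nat \<Rightarrow> 'a::comm_semiring_1"
  shows "(\<Sum>is\<in>tidx p n. prod_list (map f is)) = (\<Sum>l<n. f l) ^ p"
proof (induction p)
  case 0
  have "tidx 0 n = {[]}" by (auto simp: tidx_def)
  then show ?case by simp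
next
  case (Suc p)
  have inj: "inj_on (\<lambda>(l, is). l # is) ({..<n} \<times> tidx p n)"
    by (auto simp: inj_on_def)
  have "(\<Sum>is\<in>tidx (Suc p) n. prod_list (map f is))
      = (\<Sum>(l, is)\<in>{..<n} \<times> tidx p n. f l * prod_list (map f is))"
    unfolding tidx_Suc by (subst sum.reindex[OF inj]) (simp add: case_prod_unfold)
  also have "\<dots> = (\<Sum>l<n. f l) * (\<Sum>is\<in>tidx p n. prod_list (map f is))"
    by (simp add: sum.cartesian_product[symmetric] sum_product)
  finally show ?case using Suc by simp
qed

lemma prod_list_map_mult:
  fixes f g :: "'a \<Rightarrow> 'b::comm_monoid_mult"
  shows "prod_list (map f xs) * prod_list (map g xs) = prod_list (map (\<lambda>l. f l * g l) xs)"
  by (induction xs) (simp_all add: algebra_simps)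

lemma tapply_add:
  "tapply m n (\<lambda>is. A is + B is) x i = tapply m n A x i + tapply m n B x i"
  by (simp add: tapply_def distrib_right sum.distrib)

lemma tapply_sum:
  "tapply m n (\<lambda>is. \<Sum>k\<in>K. B k is) x i = (\<Sum>k\<in>K. tapply m n (B k) x i)"
  unfolding tapply_def by (simp add: sum_distrib_right sum.swap[of _ K])

lemma tapply_cong:
  assumes "1 \<le> m" "i < n" "\<forall>is\<in>tidx m n. A is = B is"
  shows "tapply m n A x i = tapply m n B x i"
proof -
  have "i # is \<in> tidx m n" if "is \<in> tidx (m - 1) n" for "is"
    using assms(1,2) that by (auto simp: tidx_def)
  then show ?thesis
    unfolding tapply_def using assms(3) by (intro sum.cong) auto
qed

lemma tapply_tpow: "tapply m n (tpow w) x i = w i * (\<Sum>l<n. w l * x l) ^ (m - 1)"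
proof -
  have "tapply m n (tpow w) x i = (\<Sum>is\<in>tidx (m - 1) n. w i * prod_list (map (\<lambda>l. w l * x l) is))"
    unfolding tapply_def tpow_def by (simp add: mult.assoc prod_list_map_mult)
  then show ?thesis by (simp add: sum_distrib_left[symmetric] sum_tidx_prod_list)
qed

lemma tapply_sum_tpow:
  assumes "1 \<le> m" "i < n"
    and "\<forall>is\<in>tidx m n. A is = (\<Sum>k<r1. tpow (u k) is) + (\<Sum>j<r2. tpow (v j) is)"
  shows "tapply m n A x i = (\<Sum>k<r1. u k i * (\<Sum>l<n. u k l * x l) ^ (m - 1))
                          + (\<Sum>j<r2. v j i * (\<Sum>l<n. v j l * x l) ^ (m - 1))"
  using tapply_cong[OF assms]
  by (simp add: tapply_add tapply_sum tapply_tpow)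

lemma euler_tpow:
  fixes w x :: "nat \<Rightarrow> real"
  assumes "0 < m"
  shows "(\<Sum>i<n. x i * (w i * (\<Sum>l<n. w l * x l) ^ (m - 1))) = (\<Sum>l<n. w l * x l) ^ m"
proof -
  have "(\<Sum>i<n. x i * (w i * (\<Sum>l<n. w l * x l) ^ (m - 1)))
      = (\<Sum>l<n. w l * x l) * (\<Sum>l<n. w l * x l) ^ (m - 1)"
    by (subst sum_distrib_right) (simp add: mult_ac)
  then show ?thesis
    using power_minus_mult[OF assms, of "\<Sum>l<n. w l * x l"] by (simp add: mult.commute)
qed

lemma H_eigenvalue_nonneg_even_order:
  fixes u v :: "nat \<Rightarrow> nat \<Rightarrow> real"
  assumes "even m" "0 < m"
    and tapply_eq: "\<And>x i. i < n \<Longrightarrow> tapply m n A x i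
        = (\<Sum>k<r1. u k i * (\<Sum>l<n. u k l * x l) ^ (m - 1))
        + (\<Sum>j<r2. v j i * (\<Sum>l<n. v j l * x l) ^ (m - 1))"
    and "H_eigenvalue m n A lam"
  shows "0 \<le> lam"
proof -
  obtain x where "\<exists>i<n. x i \<noteq> 0" and eig: "\<forall>i<n. tapply m n A x i = lam * x i ^ (m - 1)"
    using assms(4) unfolding H_eigenvalue_def by blast
  then obtain i0 where i0: "i0 < n" "x i0 \<noteq> 0" by blast
  have "x i * tapply m n A x i = lam * x i ^ m" if "i < n" for i
  proof -
    have "x i * tapply m n A x i = lam * (x i ^ (m - 1) * x i)"
      using eig that by simp
    then show ?thesis by (simp only: power_minus_mult[OF \<open>0 < m\<close>])
  qed
  then have "lam * (\<Sum>i<n. x i ^ m) = (\<Sum>i<n. x i * tapply m n A x i)"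
    by (simp add: sum_distrib_left)
  also have "\<dots> = (\<Sum>i<n. (\<Sum>k<r1. x i * (u k i * (\<Sum>l<n. u k l * x l) ^ (m - 1)))
                + (\<Sum>j<r2. x i * (v j i * (\<Sum>l<n. v j l * x l) ^ (m - 1))))"
    by (intro sum.cong refl) (simp add: tapply_eq distrib_left sum_distrib_left)
  also have "\<dots> = (\<Sum>k<r1. (\<Sum>i<n. x i * (u k i * (\<Sum>l<n. u k l * x l) ^ (m - 1))))
                + (\<Sum>j<r2. (\<Sum>i<n. x i * (v j i * (\<Sum>l<n. v j l * x l) ^ (m - 1))))"
    unfolding sum.distrib by (intro arg_cong2[where f = "(+)"] sum.swap)
  also have "\<dots> = (\<Sum>k<r1. (\<Sum>l<n. u k l * x l) ^ m) + (\<Sum>j<r2. (\<Sum>l<n. v j l * x l) ^ m)"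
    by (simp only: euler_tpow[OF \<open>0 < m\<close>])
  also have "0 \<le> \<dots>"
    using \<open>even m\<close> by (intro add_nonneg_nonneg sum_nonneg) (simp_all add: zero_le_even_power)
  finally have "0 \<le> lam * (\<Sum>i<n. x i ^ m)" .
  moreover have "0 < (\<Sum>i<n. x i ^ m)"
  proof (rule sum_pos2)
    show "0 < x i0 ^ m" using \<open>even m\<close> i0 by (simp add: zero_less_power_eq)
  qed (use i0 \<open>even m\<close> in \<open>simp_all add: zero_le_even_power\<close>)
  ultimately show ?thesis by (simp add: zero_le_mult_iff)
qed

lemma even_power_combination_nonneg_of_vanishing:
  fixes u v :: "nat \<Rightarrow> nat \<Rightarrow> real" and s t :: "nat \<Rightarrow> real"
  assumes "even p" "\<forall>k<r1. 0 < u k i0" "\<forall>j<r2. 0 \<le> v j i0" "\<forall>j<r2. 0 \<le> v j i"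
    and vanishing: "(\<Sum>k<r1. u k i0 * s k ^ p) + (\<Sum>j<r2. v j i0 * t j ^ p) = 0"
  shows "0 \<le> (\<Sum>k<r1. u k i * s k ^ p) + (\<Sum>j<r2. v j i * t j ^ p)"
proof -
  have u_terms: "0 \<le> u k i0 * s k ^ p" if "k < r1" for k
    using assms(1,2) that by (simp add: less_imp_le zero_le_even_power)
  have "0 \<le> (\<Sum>k<r1. u k i0 * s k ^ p)"
    using u_terms by (intro sum_nonneg) simp
  moreover have "0 \<le> (\<Sum>j<r2. v j i0 * t j ^ p)"
    using assms(1,3) by (intro sum_nonneg) (simp add: zero_le_even_power)
  ultimately have "(\<Sum>k<r1. u k i0 * s k ^ p) = 0"
    using vanishing by linarith
  then have u_terms_zero: "\<forall>k\<in>{..<r1}. u k i0 * s k ^ p = 0"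
    using sum_nonneg_eq_0_iff[OF finite_lessThan, where f = "\<lambda>k. u k i0 * s k ^ p"] u_terms by auto
  have "u k i * s k ^ p = 0" if "k < r1" for k
  proof -
    have "u k i0 * s k ^ p = 0" "u k i0 \<noteq> 0"
      using u_terms_zero assms(2) that by auto
    then show ?thesis by simp
  qed
  then have "(\<Sum>k<r1. u k i * s k ^ p) = 0"
    by (intro sum.neutral) simp
  moreover have "0 \<le> (\<Sum>j<r2. v j i * t j ^ p)"
    using assms(1,4) by (intro sum_nonneg) (simp add: zero_le_even_power)
  ultimately show ?thesis by simp
qed

lemma H_eigenvalue_nonneg_odd_order:
  fixes u v :: "nat \<Rightarrow> nat \<Rightarrow> real"
  assumes "odd m" "i0 < n" "\<forall>k<r1. 0 < u k i0" "\<forall>j<r2. \<forall>i<n. 0 \<le> v j i"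
    and tapply_eq: "\<And>x i. i < n \<Longrightarrow> tapply m n A x i
        = (\<Sum>k<r1. u k i * (\<Sum>l<n. u k l * x l) ^ (m - 1))
        + (\<Sum>j<r2. v j i * (\<Sum>l<n. v j l * x l) ^ (m - 1))"
    and "H_eigenvalue m n A lam"
  shows "0 \<le> lam"
proof -
  obtain x where "\<exists>i<n. x i \<noteq> 0" and eig: "\<forall>i<n. tapply m n A x i = lam * x i ^ (m - 1)"
    using assms(6) unfolding H_eigenvalue_def by blast
  then obtain i1 where i1: "i1 < n" "x i1 \<noteq> 0" by blast
  have "even (m - 1)" using \<open>odd m\<close> by simp
  then have power_nonneg: "0 \<le> a ^ (m - 1)" for a :: real
    by (simp add: zero_le_even_power)
  obtain i where "i < n" "0 < x i ^ (m - 1)" "0 \<le> tapply m n A x i"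
  proof (cases "x i0 ^ (m - 1) = 0")
    case False
    have "0 \<le> tapply m n A x i0"
      unfolding tapply_eq[OF assms(2)] using assms(2-4)
      by (intro add_nonneg_nonneg sum_nonneg mult_nonneg_nonneg power_nonneg)
        (simp_all add: less_imp_le)
    with False power_nonneg[of "x i0"] show ?thesis
      using that assms(2) by (simp add: order_less_le)
  next
    case True
    then have "tapply m n A x i0 = 0" using eig assms(2) by simp
    then have "(\<Sum>k<r1. u k i0 * (\<Sum>l<n. u k l * x l) ^ (m - 1))
        + (\<Sum>j<r2. v j i0 * (\<Sum>l<n. v j l * x l) ^ (m - 1)) = 0"
      using tapply_eq[OF assms(2), of x] by simp
    then have "0 \<le> tapply m n A x i1"
      unfolding tapply_eq[OF i1(1)] using assms(2,4) i1(1)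
      by (intro even_power_combination_nonneg_of_vanishing[of "m - 1" r1 u i0 r2 v i1
            "\<lambda>k. \<Sum>l<n. u k l * x l" "\<lambda>j. \<Sum>l<n. v j l * x l", OF \<open>even (m - 1)\<close> assms(3)])
        simp_all
    moreover have "0 < x i1 ^ (m - 1)"
      using \<open>even (m - 1)\<close> i1(2) by (simp add: zero_less_power_eq)
    ultimately show ?thesis using that i1(1) by blast
  qed
  with eig show ?thesis by (simp add: zero_le_mult_iff)
qed

theorem mainTheorem1:
  fixes m n r1 r2 :: nat
    and A :: "nat list \<Rightarrow> real"
    and u v :: "nat \<Rightarrow> nat \<Rightarrow> real"
    and i0 :: nat
  assumes "m \<ge> 2" and "n \<ge> 1"
    and "symmetric_tensor m n A"
    and "\<forall>is\<in>tidx m n. A is \<ge> 0"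
    and "\<forall>is\<in>tidx m n. A is = (\<Sum>k<r1. tpow (u k) is) + (\<Sum>j<r2. tpow (v j) is)"
    and "\<forall>j<r2. \<forall>i<n. v j i \<ge> 0"
    and "i0 < n"
    and "\<forall>k<r1. u k i0 > 0"
  shows "doubly_nonnegative m n A"
proof -
  have tapply_eq: "tapply m n A x i
      = (\<Sum>k<r1. u k i * (\<Sum>l<n. u k l * x l) ^ (m - 1))
      + (\<Sum>j<r2. v j i * (\<Sum>l<n. v j l * x l) ^ (m - 1))" if "i < n" for x i
    using tapply_sum_tpow[OF _ that assms(5)] assms(1) by simp
  have "0 \<le> lam" if "H_eigenvalue m n A lam" for lam
  proof (cases "even m")
    case True
    with assms(1) tapply_eq that show ?thesis by (intro H_eigenvalue_nonneg_even_order) auto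
  next
    case False
    with assms(6-8) tapply_eq that show ?thesis by (intro H_eigenvalue_nonneg_odd_order) auto
  qed
  with assms(3,4) show ?thesis
    unfolding doubly_nonnegative_def by blast
qed

end
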